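(* Fix integers $P>1$ and $N\ge 1$, and set $L=N+P-1$. For $\mathbf{b}=[b_1,\dots,b_N]^T\in\{\pm1\}^N$ let $\mathbf{B}$ be the $L\times P$ matrix whose $j$th column ($1\le j\le P$) is $[\underbrace{0,\dots,0}_{j-1},b_1,\dots,b_N,\underbrace{0,\dots,0}_{P-j}]^T$. For $\mathbf{c}=(c_1,\dots,c_{P-1})\in\{\pm1\}^{P-1}$ let $\mathbf{G}(\mathbf{c})$ be the symmetric $P\times P$ Toeplitz matrix with all diagonal entries equal to $N$ and $(i,j)$ entry $c_{|i-j|}$ for $i\ne j$. For a prefix $\mathbf{b}_{(\ell)}=[b_1,\dots,b_\ell]\in\{\pm1\}^\ell$ ($1\le\ell\le N$), let $\mathcal{A}(\mathbf{b}_{(\ell)}\mid\mathbf{G}(\mathbf{c}))$ be the set of all $\mathbf{b}'\in\{\pm1\}^N$ whose first $\ell$ entries equal $b_1,\dots,b_\ell$ and whose associated matrix $\mathbf{B}'$ satisfies $\mathbf{B}'^T\mathbf{B}'=\mathbf{G}(\mathbf{c})$. For an integer $k\ge 0$, an integer vector $\mathbf{q}=(q_1,\dots,q_{P-1})\in\mathbb{Z}^{P-1}$ and $d_{2-P},\dots,d_0\in\{-1,0,1\}$, let $A_k(\mathbf{q}\mid d_{2-P},\dots,d_0)$ be the number of $(d_1,\dots,d_k)\in\{\pm1\}^k$ such that $q_j=\sum_{i=1}^k d_{i-j}d_i$ for all $1\le j\le P-1$ (for $k=0$ this equals $1$ if $\mathbf{q}=\mathbf{0}$ and $0$ otherwise).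 Let $\mathbf{m}_\ell=(m_\ell^{(1)},\dots,m_\ell^{(P-1)})$ with $m_\ell^{(j)}=(b_1b_{j+1}+b_2b_{j+2}+\cdots+b_{\ell-j}b_\ell)\cdot\mathbf{1}\{\ell>j\}$, and use the convention $b_i=0$ for $i\le 0$. Then for $\ell=1,2,\dots,N$, $$|\mathcal{A}(\mathbf{b}_{(\ell)}\mid\mathbf{G}(\mathbf{c}))|=A_{N-\ell}\big(\mathbf{c}-\mathbf{m}_\ell\,\big|\,b_{\ell-P+2},\dots,b_\ell\big).$$
   Context: $\mathbf{1}\{\cdot\}$ denotes the indicator function. $\mathbf{B}$ is the convolution matrix of the codeword for a channel of memory order $P-1$; the diagonal entries of $\mathbf{B}^T\mathbf{B}$ all equal $N$ and its $(i,j)$ entry is the aperiodic autocorrelation $\sum_t b_tb_{t+|i-j|}$. *)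

theory Defs
  imports Main
begin

text \<open>Sequences b_1..b_N are modelled as functions int => int that take values
  in {-1,1} on {1..N} and are 0 elsewhere (so b_i = 0 for i <= 0).\<close>

definition pm1_seqs :: "nat \<Rightarrow> (int \<Rightarrow> int) set" where
  "pm1_seqs N = {b. (\<forall>i\<in>{1..int N}. b i \<in> {-1, 1}) \<and> (\<forall>i. i \<notin> {1..int N} \<longrightarrow> b i = 0)}"

definition convmat :: "nat \<Rightarrow> (int \<Rightarrow> int) \<Rightarrow> nat \<Rightarrow> nat \<Rightarrow> int" where
  "convmat N b t j = (let s = int t - int j + 1 in if 1 \<le> s \<and> s \<le> int N then b s else 0)"

definition gram :: "nat \<Rightarrow> nat \<Rightarrow> (int \<Rightarrow> int) \<Rightarrow> nat \<Rightarrow> nat \<Rightarrow> int" where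
  "gram N P b i j = (\<Sum>t = 1..N + P - 1. convmat N b t i * convmat N b t j)"

definition Gmat :: "nat \<Rightarrow> (nat \<Rightarrow> int) \<Rightarrow> nat \<Rightarrow> nat \<Rightarrow> int" where
  "Gmat N c i j = (if i = j then int N else c (if i \<le> j then j - i else i - j))"

definition Aset :: "nat \<Rightarrow> nat \<Rightarrow> (int \<Rightarrow> int) \<Rightarrow> nat \<Rightarrow> (nat \<Rightarrow> int) \<Rightarrow> (int \<Rightarrow> int) set" where
  "Aset N P b l c = {b' \<in> pm1_seqs N. (\<forall>i\<in>{1..int l}. b' i = b i) \<and>
      (\<forall>i\<in>{1..P}. \<forall>j\<in>{1..P}. gram N P b' i j = Gmat N c i j)}"

text \<open>A_k(q | d_{2-P},...,d_0): number of (d_1..d_k) in {+-1}^k with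
  q_j = sum_{i=1}^k d_{i-j} d_i for 1 <= j <= P-1; the given values d_{2-P..0}
  are supplied by the function d0 (only its values on {2-P..0} matter).\<close>
definition Acount :: "nat \<Rightarrow> nat \<Rightarrow> (nat \<Rightarrow> int) \<Rightarrow> (int \<Rightarrow> int) \<Rightarrow> nat" where
  "Acount k P q d0 = card {e \<in> pm1_seqs k.
      \<forall>j\<in>{1..P - 1}. q j = (\<Sum>i = 1..int k. (if i - int j \<le> 0 then d0 (i - int j) else e (i - int j)) * e i)}"

definition mvec :: "(int \<Rightarrow> int) \<Rightarrow> nat \<Rightarrow> nat \<Rightarrow> int" where
  "mvec b l j = (if l > j then (\<Sum>i = 1..int l - int j. b i * b (i + int j)) else 0)"

end

theory Submission
  imports Defs
begin

text \<open>Since every column of \<open>B\<close> is a shift of \<open>b\<close>, the Gram matrix \<open>B\<^sup>T B\<close> is the Toeplitz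
  matrix of aperiodic autocorrelations of \<open>b\<close>, so \<open>B\<^sup>T B = G(c)\<close> says exactly that the
  autocorrelation at every lag \<open>1 \<le> s \<le> P - 1\<close> equals \<open>c\<^sub>s\<close>. Once \<open>b\<^sub>1, \<dots>, b\<^sub>\<ell>\<close> are fixed,
  the autocorrelation at lag \<open>s\<close> splits into the part \<open>m\<^sub>\<ell>\<^sup>(\<^sup>s\<^sup>)\<close> formed inside the prefix and
  the part involving the remaining entries \<open>d\<^sub>i = b\<^sub>\<ell>\<^sub>+\<^sub>i\<close>, in which the prefix only enters
  through its last \<open>P - 1\<close> entries. Dropping the prefix is therefore a bijection from
  \<open>\<A>(b\<^sub>(\<^sub>\<ell>\<^sub>) | G(c))\<close> onto the sequences counted by \<open>A\<^sub>N\<^sub>-\<^sub>\<ell>(c - m\<^sub>\<ell> | \<dots>)\<close>.\<close>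

lemma pm1_seqs_outside: "b \<in> pm1_seqs N \<Longrightarrow> x < 1 \<or> x > int N \<Longrightarrow> b x = 0"
  unfolding pm1_seqs_def by auto

lemma pm1_seqs_inside: "b \<in> pm1_seqs N \<Longrightarrow> 1 \<le> x \<Longrightarrow> x \<le> int N \<Longrightarrow> b x \<in> {-1, 1}"
  unfolding pm1_seqs_def by auto

lemma pm1_seqs_agree_below:
  assumes "b' \<in> pm1_seqs N" "b \<in> pm1_seqs N" "\<forall>i\<in>{1..int l}. b' i = b i" "x \<le> int l"
  shows "b' x = b x"
  using assms pm1_seqs_outside[of b' N x] pm1_seqs_outside[of b N x] by (cases "x < 1") auto

definition acorr :: "nat \<Rightarrow> (int \<Rightarrow> int) \<Rightarrow> int \<Rightarrow> int" where
  "acorr N b s = (\<Sum>w = 1..int N. b w * b (w - s))"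

lemma convmat_pm1_seqs: "b \<in> pm1_seqs N \<Longrightarrow> convmat N b t j = b (int t - int j + 1)"
  unfolding convmat_def Let_def using pm1_seqs_outside[of b N] by auto

lemma sum_shift_window:
  fixes h :: "int \<Rightarrow> int"
  assumes h0: "\<And>w. w < 1 \<or> w > int N \<Longrightarrow> h w = 0" and i: "1 \<le> i" "i \<le> P"
  shows "(\<Sum>t = 1..N + P - 1. h (int t - int i + 1)) = (\<Sum>w = 1..int N. h w)"
proof -
  let ?f = "\<lambda>t::nat. int t - int i + 1"
  have inj: "inj_on ?f {1..N + P - 1}" by (auto simp: inj_on_def)
  have "{1..int N} \<subseteq> ?f ` {1..N + P - 1}"
  proof
    fix w assume w: "w \<in> {1..int N}"
    then have "w = ?f (nat (w + int i - 1))" "nat (w + int i - 1) \<in> {1..N + P - 1}"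
      using i by auto
    then show "w \<in> ?f ` {1..N + P - 1}" by blast
  qed
  then have "(\<Sum>w = 1..int N. h w) = (\<Sum>w\<in>?f ` {1..N + P - 1}. h w)"
    by (intro sum.mono_neutral_left) (use h0 in auto)
  also have "\<dots> = (\<Sum>t = 1..N + P - 1. h (int t - int i + 1))"
    by (subst sum.reindex[OF inj]) simp
  finally show ?thesis by simp
qed

lemma gram_eq_acorr:
  assumes b: "b \<in> pm1_seqs N" and i: "i \<in> {1..P}"
  shows "gram N P b i j = acorr N b (int j - int i)"
proof -
  have "gram N P b i j = (\<Sum>t = 1..N + P - 1. (\<lambda>w. b w * b (w - (int j - int i))) (int t - int i + 1))"
    unfolding gram_def convmat_pm1_seqs[OF b] by (rule sum.cong) (auto simp: algebra_simps)
  also have "\<dots> = acorr N b (int j - int i)"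
    unfolding acorr_def by (rule sum_shift_window) (use i pm1_seqs_outside[OF b] in auto)
  finally show ?thesis .
qed

lemma acorr_zero: "b \<in> pm1_seqs N \<Longrightarrow> acorr N b 0 = int N"
proof -
  assume b: "b \<in> pm1_seqs N"
  have "b w * b w = 1" if "w \<in> {1..int N}" for w
    using pm1_seqs_inside[OF b, of w] that by auto
  then show ?thesis unfolding acorr_def by simp
qed

lemma gram_sym: "gram N P b i j = gram N P b j i"
  unfolding gram_def by (simp add: mult.commute)

lemma gram_eq_Gmat_iff:
  assumes b: "b \<in> pm1_seqs N"
  shows "(\<forall>i\<in>{1..P}. \<forall>j\<in>{1..P}. gram N P b i j = Gmat N c i j) \<longleftrightarrow>
         (\<forall>s\<in>{1..P - 1}. acorr N b (int s) = c s)"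
proof
  assume G: "\<forall>i\<in>{1..P}. \<forall>j\<in>{1..P}. gram N P b i j = Gmat N c i j"
  show "\<forall>s\<in>{1..P - 1}. acorr N b (int s) = c s"
  proof
    fix s assume s: "s \<in> {1..P - 1}"
    then have "acorr N b (int s) = gram N P b 1 (1 + s)"
      using gram_eq_acorr[OF b, of 1 P "1 + s"] by auto
    also have "\<dots> = Gmat N c 1 (1 + s)" using G s by auto
    finally show "acorr N b (int s) = c s" using s by (simp add: Gmat_def)
  qed
next
  assume A: "\<forall>s\<in>{1..P - 1}. acorr N b (int s) = c s"
  have upper: "gram N P b i j = Gmat N c i j" if ij: "i \<le> j" "i \<in> {1..P}" "j \<in> {1..P}" for i j
  proof (cases "i = j")
    case True
    then show ?thesis using gram_eq_acorr[OF b ij(2)] acorr_zero[OF b] by (simp add: Gmat_def)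
  next
    case False
    then have "j - i \<in> {1..P - 1}" and lag: "int j - int i = int (j - i)" using ij by auto
    then have "acorr N b (int j - int i) = c (j - i)" using A unfolding lag by blast
    then show ?thesis using gram_eq_acorr[OF b ij(2)] ij(1) False by (simp add: Gmat_def)
  qed
  show "\<forall>i\<in>{1..P}. \<forall>j\<in>{1..P}. gram N P b i j = Gmat N c i j"
  proof (intro ballI)
    fix i j assume "i \<in> {1..P}" "j \<in> {1..P}"
    then show "gram N P b i j = Gmat N c i j"
      using upper[of i j] upper[of j i] gram_sym[of N P b i j]
      by (cases "i \<le> j") (auto simp: Gmat_def)
  qed
qed

definition pm1_extensions :: "nat \<Rightarrow> nat \<Rightarrow> (int \<Rightarrow> int) \<Rightarrow> (int \<Rightarrow> int) set" where
  "pm1_extensions N l b = {b' \<in> pm1_seqs N. \<forall>i\<in>{1..int l}. b' i = b i}"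

definition seq_drop :: "nat \<Rightarrow> nat \<Rightarrow> (int \<Rightarrow> int) \<Rightarrow> int \<Rightarrow> int" where
  "seq_drop l N b i = (if 1 \<le> i \<and> i \<le> int N - int l then b (int l + i) else 0)"

definition seq_append :: "nat \<Rightarrow> (int \<Rightarrow> int) \<Rightarrow> (int \<Rightarrow> int) \<Rightarrow> int \<Rightarrow> int" where
  "seq_append l b e x = (if x \<le> int l then b x else e (x - int l))"

definition prefixed_corr :: "nat \<Rightarrow> (int \<Rightarrow> int) \<Rightarrow> (int \<Rightarrow> int) \<Rightarrow> nat \<Rightarrow> int" where
  "prefixed_corr k d0 e j =
     (\<Sum>i = 1..int k. (if i - int j \<le> 0 then d0 (i - int j) else e (i - int j)) * e i)"

lemma Acount_eq_card:
  "Acount k P q d0 = card {e \<in> pm1_seqs k. \<forall>j\<in>{1..P - 1}. q j = prefixed_corr k d0 e j}"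
  unfolding Acount_def prefixed_corr_def ..

lemma bij_betw_seq_drop:
  assumes b: "b \<in> pm1_seqs N" and lN: "l \<le> N"
  shows "bij_betw (seq_drop l N) (pm1_extensions N l b) (pm1_seqs (N - l))"
  unfolding pm1_extensions_def
proof (rule bij_betw_byWitness[where f' = "seq_append l b"])
  show "\<forall>b'\<in>{b' \<in> pm1_seqs N. \<forall>i\<in>{1..int l}. b' i = b i}. seq_append l b (seq_drop l N b') = b'"
  proof (intro ballI ext)
    fix b' x assume "b' \<in> {b' \<in> pm1_seqs N. \<forall>i\<in>{1..int l}. b' i = b i}"
    then have b': "b' \<in> pm1_seqs N" and agree: "\<forall>i\<in>{1..int l}. b' i = b i" by auto
    show "seq_append l b (seq_drop l N b') x = b' x"
      using pm1_seqs_agree_below[OF b' b agree, of x] pm1_seqs_outside[OF b', of x]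
      by (simp add: seq_append_def seq_drop_def)
  qed
  show "\<forall>e\<in>pm1_seqs (N - l). seq_drop l N (seq_append l b e) = e"
  proof (intro ballI ext)
    fix e x assume e: "e \<in> pm1_seqs (N - l)"
    show "seq_drop l N (seq_append l b e) x = e x"
      using pm1_seqs_outside[OF e, of x] lN by (auto simp: seq_append_def seq_drop_def)
  qed
  show "seq_drop l N ` {b' \<in> pm1_seqs N. \<forall>i\<in>{1..int l}. b' i = b i} \<subseteq> pm1_seqs (N - l)"
  proof clarify
    fix b' assume b': "b' \<in> pm1_seqs N"
    have "seq_drop l N b' i \<in> {-1, 1}" if "i \<in> {1..int (N - l)}" for i
      using that pm1_seqs_inside[OF b', of "int l + i"] lN by (simp add: seq_drop_def of_nat_diff)
    moreover have "seq_drop l N b' i = 0" if "i \<notin> {1..int (N - l)}" for i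
      using that lN by (auto simp: seq_drop_def of_nat_diff)
    ultimately show "seq_drop l N b' \<in> pm1_seqs (N - l)"
      unfolding pm1_seqs_def by blast
  qed
  show "seq_append l b ` pm1_seqs (N - l) \<subseteq> {b' \<in> pm1_seqs N. \<forall>i\<in>{1..int l}. b' i = b i}"
  proof (rule image_subsetI)
    fix e assume e: "e \<in> pm1_seqs (N - l)"
    have "seq_append l b e i \<in> {-1, 1}" if "i \<in> {1..int N}" for i
      using that pm1_seqs_inside[OF b, of i] pm1_seqs_inside[OF e, of "i - int l"] lN
      by (simp add: seq_append_def of_nat_diff)
    moreover have "seq_append l b e i = 0" if "i \<notin> {1..int N}" for i
      using that pm1_seqs_outside[OF b, of i] pm1_seqs_outside[OF e, of "i - int l"] lN
      by (auto simp: seq_append_def of_nat_diff)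
    ultimately have "seq_append l b e \<in> pm1_seqs N"
      unfolding pm1_seqs_def by blast
    then show "seq_append l b e \<in> {b' \<in> pm1_seqs N. \<forall>i\<in>{1..int l}. b' i = b i}"
      by (simp add: seq_append_def)
  qed
qed

lemma mvec_eq_prefix_acorr:
  assumes b: "b \<in> pm1_seqs N"
  shows "mvec b l s = (\<Sum>w = 1..int l. b w * b (w - int s))"
proof (cases "l > s")
  case True
  have "(\<Sum>w = 1..int l. b w * b (w - int s)) = (\<Sum>w = 1 + int s..int l. b w * b (w - int s))"
    by (rule sum.mono_neutral_right) (use True pm1_seqs_outside[OF b] in auto)
  also have "\<dots> = (\<Sum>w\<in>(\<lambda>i. i + int s) ` {1..int l - int s}. b w * b (w - int s))"
    by simp
  also have "\<dots> = (\<Sum>i = 1..int l - int s. b i * b (i + int s))"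
    by (subst sum.reindex) (auto simp: inj_on_def mult.commute)
  finally show ?thesis using True unfolding mvec_def by simp
next
  case False
  then have "(\<Sum>w = 1..int l. b w * b (w - int s)) = 0"
    by (intro sum.neutral) (auto simp: pm1_seqs_outside[OF b])
  then show ?thesis using False unfolding mvec_def by simp
qed

lemma acorr_split_prefix:
  assumes b': "b' \<in> pm1_seqs N" and b: "b \<in> pm1_seqs N"
    and agree: "\<forall>i\<in>{1..int l}. b' i = b i" and lN: "l \<le> N"
  shows "acorr N b' (int s) = mvec b l s + prefixed_corr (N - l) (\<lambda>i. b (int l + i)) (seq_drop l N b') s"
proof -
  have "{1..int N} = {1..int l} \<union> {int l + 1..int N}" using lN by auto
  then have split: "acorr N b' (int s) =
      (\<Sum>w = 1..int l. b' w * b' (w - int s)) + (\<Sum>w = int l + 1..int N. b' w * b' (w - int s))"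
    unfolding acorr_def by (simp add: sum.union_disjoint)
  have prefix: "(\<Sum>w = 1..int l. b' w * b' (w - int s)) = mvec b l s"
    unfolding mvec_eq_prefix_acorr[OF b]
    by (rule sum.cong) (use pm1_seqs_agree_below[OF b' b agree] in auto)
  have shifted: "{int l + 1..int N} = (\<lambda>i. i + int l) ` {1..int (N - l)}" using lN by auto
  have "(\<Sum>w = int l + 1..int N. b' w * b' (w - int s)) =
      (\<Sum>i = 1..int (N - l). b' (i + int l) * b' (i + int l - int s))"
    unfolding shifted by (subst sum.reindex) (auto simp: inj_on_def)
  also have "\<dots> = prefixed_corr (N - l) (\<lambda>i. b (int l + i)) (seq_drop l N b') s"
    unfolding prefixed_corr_def
    by (rule sum.cong) (use lN pm1_seqs_agree_below[OF b' b agree] in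
        \<open>auto simp: seq_drop_def algebra_simps\<close>)
  finally show ?thesis using split prefix by simp
qed

theorem lemma4:
  fixes P N l :: nat and b :: "int \<Rightarrow> int" and c :: "nat \<Rightarrow> int"
  assumes "P > 1" and "N \<ge> 1"
    and "b \<in> pm1_seqs N"
    and "\<forall>j\<in>{1..P - 1}. c j \<in> {-1, 1}"
    and "1 \<le> l" and "l \<le> N"
  shows "card (Aset N P b l c) = Acount (N - l) P (\<lambda>j. c j - mvec b l j) (\<lambda>i. b (int l + i))"
proof -
  let ?fits = "\<lambda>e. \<forall>j\<in>{1..P - 1}. c j - mvec b l j = prefixed_corr (N - l) (\<lambda>i. b (int l + i)) e j"
  have fits_iff: "(\<forall>i\<in>{1..P}. \<forall>j\<in>{1..P}. gram N P b' i j = Gmat N c i j) \<longleftrightarrow> ?fits (seq_drop l N b')"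
    if "b' \<in> pm1_seqs N" "\<forall>i\<in>{1..int l}. b' i = b i" for b'
    unfolding gram_eq_Gmat_iff[OF that(1)] acorr_split_prefix[OF that(1) assms(3) that(2) assms(6)]
    by (auto simp: algebra_simps)
  have "Aset N P b l c = {b' \<in> pm1_extensions N l b. ?fits (seq_drop l N b')}"
    unfolding Aset_def pm1_extensions_def using fits_iff by blast
  moreover have "bij_betw (seq_drop l N)
      {b' \<in> pm1_extensions N l b. ?fits (seq_drop l N b')}
      {e \<in> pm1_seqs (N - l). ?fits e}"
    by (rule bij_betw_Collect[OF bij_betw_seq_drop[OF assms(3,6)]]) simp
  ultimately show ?thesis
    unfolding Acount_eq_card by (simp add: bij_betw_same_card)
qed

end
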